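(* Let $m,K$ be positive integers and $b_1,\dots,b_{3m}$ positive integers with $K/4<b_i<K/2$ and $\sum_i b_i=mK$. Set $W=100(5m)^2K$, $a_i=b_i+W$, $L=3W+K$, $\epsilon=1/(400(5m)^2)$, $h=\lfloor 4\epsilon L\rfloor$, $H=L+h$, $\beta_0=h/H$, $\beta_i=a_i/H-1/3$ ($1\le i\le 3m$). Let $X$ be the multiset consisting of $a_1,\dots,a_{3m}$, $m$ copies of $-H$ and $m$ copies of $h$, and let $T_{\min}$ be a minimum-cost addition tree over $X$. (1) If $z$ is a node of $T_{\min}$ with $z>0$, then $z$ is of the form $\lambda H$, $(1/3+\lambda)H$, or $(2/3+\lambda)H$. (2) If $z$ is an internal node of $T_{\min}$ with $z<0$, then $z$ is of the form $\lambda H$, $(-1/3+\lambda)H$, or $(-2/3+\lambda)H$.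
   Context: An addition tree over a multiset $X$ is a full binary tree whose leaves are labeled by the elements of $X$ (each used once), each internal node having value equal to the sum of its children's values; its cost is the sum of the absolute values of its internal nodes, and $T_{\min}$ minimizes the cost. Nodes are identified with their values. A "$\lambda$" denotes a sum of at most $5m$ numbers each of the form $\pm\beta_i$ with $0\le i\le 3m$ (different occurrences of $\lambda$ may denote different such sums). Every node value can be written as $(N/3+\lambda)H$ with $N$ an integer; since $|\lambda|\le 1/(500m)$, $N$ and the value of $\lambda$ are uniquely determined. *)

theory Defs
  imports Complex_Main "HOL-Library.Multiset"
begin

datatype atree = Leaf real | Node atree atree

fun aval :: "atree \<Rightarrow> real" where
  "aval (Leaf x) = x"
| "aval (Node l r) = aval l + aval r"

fun leaves :: "atree \<Rightarrow> real multiset" where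
  "leaves (Leaf x) = {#x#}"
| "leaves (Node l r) = leaves l + leaves r"

fun acost :: "atree \<Rightarrow> real" where
  "acost (Leaf x) = 0"
| "acost (Node l r) = \<bar>aval l + aval r\<bar> + acost l + acost r"

fun subtrees :: "atree \<Rightarrow> atree set" where
  "subtrees (Leaf x) = {Leaf x}"
| "subtrees (Node l r) = insert (Node l r) (subtrees l \<union> subtrees r)"

fun is_internal :: "atree \<Rightarrow> bool" where
  "is_internal (Leaf x) = False"
| "is_internal (Node l r) = True"

definition addition_tree :: "real multiset \<Rightarrow> atree \<Rightarrow> bool" where
  "addition_tree X T \<longleftrightarrow> leaves T = X"

definition min_addition_tree :: "real multiset \<Rightarrow> atree \<Rightarrow> bool" where
  "min_addition_tree X T \<longleftrightarrow> addition_tree X T \<and>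
     (\<forall>T'. addition_tree X T' \<longrightarrow> acost T \<le> acost T')"

text \<open>A "lambda": a sum of at most 5m numbers, each of the form +beta_i or -beta_i
with 0 <= i <= 3m.  A signed term is encoded as (sign, index).\<close>
definition is_lambda :: "nat \<Rightarrow> (nat \<Rightarrow> real) \<Rightarrow> real \<Rightarrow> bool" where
  "is_lambda m \<beta> x \<longleftrightarrow> (\<exists>ss :: (bool \<times> nat) list.
      length ss \<le> 5 * m \<and> (\<forall>(s, i) \<in> set ss. i \<le> 3 * m) \<and>
      x = sum_list (map (\<lambda>(s, i). if s then \<beta> i else - \<beta> i) ss))"

definition of_form :: "nat \<Rightarrow> (nat \<Rightarrow> real) \<Rightarrow> real \<Rightarrow> real \<Rightarrow> real \<Rightarrow> bool" where
  "of_form m \<beta> H c z \<longleftrightarrow> (\<exists>l. is_lambda m \<beta> l \<and> z = (c + l) * H)"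

end

theory Submission
  imports Defs
begin

text \<open>
  Label each leaf by an integer: 1 for every \<open>a\<^sub>i\<close>, -3 for \<open>-H\<close> and 0 for \<open>h\<close>,
  and let \<open>N(S)\<close> be the sum of the labels below a node \<open>S\<close>. Then
  \<open>S = (N(S)/3 + \<lambda>) H\<close>, where \<open>\<lambda>\<close> is the sum of the deviations
  \<open>x/H - label(x)/3\<close> of the leaves below \<open>S\<close>; each deviation is 0 or some \<open>\<beta>\<^sub>i\<close>,
  and their absolute values add up to at most 1/300. Hence \<open>3S/H\<close> lies within 1/100 of
  \<open>N(S)\<close>, and the root has label \<open>3m - 3m = 0\<close>.

  In a minimum-cost tree, exchanging a grandchild with its uncle cannot decrease the cost.
  At a node of maximal label \<open>M \<ge> 3\<close> whose children have smaller labels, this forces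
  the uncle to have label \<open>\<le> -M - 1\<close>; at a minimal internal node of label
  \<open>\<mu> \<le> -3\<close> it forces a node of label \<open>\<ge> -\<mu>\<close>, even \<open>\<ge> 1 - \<mu>\<close> when
  \<open>\<mu> \<le> -4\<close>. Playing the two against each other shows that all labels are at most 2 and
  all internal labels at least -2; the sign of \<open>S\<close> then determines the sign of \<open>N(S)\<close>.
\<close>

section \<open>Addition trees and swap optimality\<close>

lemma subtrees_refl: "T \<in> subtrees T"
  by (cases T) auto

lemma subtrees_trans: "S \<in> subtrees T \<Longrightarrow> subtrees S \<subseteq> subtrees T"
  by (induction T) auto

lemma subtrees_NodeD: "Node l r \<in> subtrees T \<Longrightarrow> l \<in> subtrees T \<and> r \<in> subtrees T"
  using subtrees_trans subtrees_refl by fastforce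

lemma finite_subtrees: "finite (subtrees T)"
  by (induction T) auto

lemma leaves_subtrees_subset: "S \<in> subtrees T \<Longrightarrow> leaves S \<subseteq># leaves T"
  by (induction T) (auto intro: subset_mset.order_trans)

lemma aval_eq_sum_leaves: "aval T = \<Sum>\<^sub># (leaves T)"
  by (induction T) auto

definition siblings :: "atree \<Rightarrow> atree \<Rightarrow> atree \<Rightarrow> bool" where
  "siblings T S y \<longleftrightarrow> Node S y \<in> subtrees T \<or> Node y S \<in> subtrees T"

lemma siblings_in_subtrees: "siblings T S y \<Longrightarrow> S \<in> subtrees T \<and> y \<in> subtrees T"
  unfolding siblings_def using subtrees_NodeD by blast

lemma siblings_NodeD:
  "siblings T (Node A B) y \<Longrightarrow> A \<in> subtrees T \<and> B \<in> subtrees T \<and> y \<in> subtrees T"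
  using siblings_in_subtrees subtrees_NodeD by blast

lemma subtrees_has_sibling:
  "S \<in> subtrees T \<Longrightarrow> S \<noteq> T \<Longrightarrow> \<exists>y. siblings T S y"
  unfolding siblings_def by (induction T) auto

lemma acost_replace_subtree:
  assumes "S \<in> subtrees T" and "leaves S' = leaves S"
  shows "\<exists>T'. leaves T' = leaves T \<and> acost T' = acost T + (acost S' - acost S)"
  using assms
proof (induction T)
  case (Leaf x)
  then show ?case by (intro exI[of _ S']) auto
next
  case (Node l r)
  consider "S = Node l r" | "S \<in> subtrees l" | "S \<in> subtrees r"
    using Node.prems(1) by auto
  then show ?case
  proof cases
    case 1
    then show ?thesis using Node.prems(2) by (intro exI[of _ S']) auto
  next
    case 2
    then obtain l' where "leaves l' = leaves l" "acost l' = acost l + (acost S' - acost S)"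
      using Node.IH(1) Node.prems(2) by blast
    then show ?thesis
      by (intro exI[of _ "Node l' r"]) (simp add: aval_eq_sum_leaves)
  next
    case 3
    then obtain r' where "leaves r' = leaves r" "acost r' = acost r + (acost S' - acost S)"
      using Node.IH(2) Node.prems(2) by blast
    then show ?thesis
      by (intro exI[of _ "Node l r'"]) (simp add: aval_eq_sum_leaves)
  qed
qed

definition swap_optimal :: "atree \<Rightarrow> bool" where
  "swap_optimal T \<longleftrightarrow> (\<forall>A B y. siblings T (Node A B) y \<longrightarrow>
     \<bar>aval A + aval B\<bar> \<le> \<bar>aval A + aval y\<bar> \<and> \<bar>aval A + aval B\<bar> \<le> \<bar>aval B + aval y\<bar>)"

lemma min_addition_tree_swap_optimal:
  assumes "min_addition_tree X T"
  shows "swap_optimal T"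
  unfolding swap_optimal_def
proof (intro allI impI)
  fix A B y
  assume "siblings T (Node A B) y"
  then obtain S where S: "S \<in> subtrees T" and "S = Node (Node A B) y \<or> S = Node y (Node A B)"
    unfolding siblings_def by blast
  then have cost_S: "acost S = \<bar>aval A + aval B + aval y\<bar> + \<bar>aval A + aval B\<bar> + acost A + acost B + acost y"
    and leaves_S: "leaves S = leaves A + leaves B + leaves y"
    by (auto simp: algebra_simps)
  have no_gain: "acost S \<le> acost S'" if same_leaves: "leaves S' = leaves S" for S'
  proof -
    obtain T' where "leaves T' = leaves T" "acost T' = acost T + (acost S' - acost S)"
      using acost_replace_subtree[OF S same_leaves] by blast
    then show ?thesis
      using assms unfolding min_addition_tree_def addition_tree_def by fastforce
  qed
  have "acost S \<le> acost (Node (Node A y) B)" and "acost S \<le> acost (Node (Node B y) A)"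
    using leaves_S by (intro no_gain; simp add: ac_simps)+
  then show "\<bar>aval A + aval B\<bar> \<le> \<bar>aval A + aval y\<bar> \<and> \<bar>aval A + aval B\<bar> \<le> \<bar>aval B + aval y\<bar>"
    using cost_S by (simp add: algebra_simps)
qed

section \<open>Integer labels of a swap-optimal tree\<close>

fun label_sum :: "(real \<Rightarrow> int) \<Rightarrow> atree \<Rightarrow> int" where
  "label_sum f (Leaf x) = f x"
| "label_sum f (Node l r) = label_sum f l + label_sum f r"

lemma label_sum_eq_sum_leaves: "label_sum f T = (\<Sum>x\<in>#leaves T. f x)"
  by (induction T) auto

lemma le_neg_if_abs_le_abs:
  fixes p q :: real
  assumes "\<bar>p\<bar> \<le> \<bar>q\<bar>" and "0 < p" and "q < p"
  shows "q \<le> - p"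
  using assms by linarith

locale labelled_swap_optimal_tree =
  fixes T :: atree and f :: "real \<Rightarrow> int" and c :: real
  assumes swap_optimal: "swap_optimal T"
    and scale_pos: "0 < c"
    and near_label: "\<And>S. S \<in> subtrees T \<Longrightarrow> \<bar>c * aval S - label_sum f S\<bar> \<le> 1/100"
    and leaf_label_range: "\<And>x. -3 \<le> f x \<and> f x \<le> 1"
    and root_label: "label_sum f T = 0"
begin

abbreviation N :: "atree \<Rightarrow> int" where
  "N \<equiv> label_sum f"

definition u :: "atree \<Rightarrow> real" where
  "u S = c * aval S"

lemma near_label_bounds:
  assumes "S \<in> subtrees T"
  shows "N S - 1/100 \<le> u S \<and> u S \<le> N S + 1/100"
  using near_label[OF assms] unfolding u_def by linarith

lemma swap_optimal_scaled:
  assumes "siblings T (Node A B) y"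
  shows "\<bar>u A + u B\<bar> \<le> \<bar>u A + u y\<bar> \<and> \<bar>u A + u B\<bar> \<le> \<bar>u B + u y\<bar>"
proof -
  have scale: "\<bar>u P + u Q\<bar> = c * \<bar>aval P + aval Q\<bar>" for P Q
    using scale_pos by (simp add: u_def abs_mult flip: distrib_left)
  show ?thesis
    using swap_optimal assms scale_pos unfolding swap_optimal_def scale
    by (auto intro: mult_left_mono)
qed

lemma internal_if_label_out_of_leaf_range:
  assumes "N S < -3 \<or> 1 < N S"
  shows "is_internal S"
proof (cases S)
  case (Leaf x)
  then show ?thesis
    using assms leaf_label_range[of x] by auto
qed simp

lemma swap_bound_above:
  assumes "siblings T (Node A B) y \<or> siblings T (Node B A) y"
    and "1 \<le> N A + N B" and "1 \<le> N B" and "N y \<le> 0"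
  shows "N y \<le> - 2 * N A - N B"
proof -
  have A: "A \<in> subtrees T" and B: "B \<in> subtrees T" and y: "y \<in> subtrees T"
    using assms(1) siblings_NodeD by blast+
  have labels: "1 \<le> real_of_int (N A) + real_of_int (N B)" "1 \<le> real_of_int (N B)"
    "real_of_int (N y) \<le> 0"
    using assms(2-4) by simp_all
  have "\<bar>u A + u B\<bar> \<le> \<bar>u A + u y\<bar>"
    using assms(1) swap_optimal_scaled[of A B y] swap_optimal_scaled[of B A y]
    by (auto simp: ac_simps)
  moreover have "0 < u A + u B" and "u A + u y < u A + u B"
    using labels near_label_bounds[OF A] near_label_bounds[OF B] near_label_bounds[OF y]
    by linarith+
  ultimately have "u A + u y \<le> - (u A + u B)"
    by (rule le_neg_if_abs_le_abs)
  then have "real_of_int (N y) < real_of_int (- 2 * N A - N B + 1)"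
    using near_label_bounds[OF A] near_label_bounds[OF B] near_label_bounds[OF y] by simp
  then show ?thesis
    by simp
qed

lemma swap_bound_below:
  assumes "siblings T (Node A B) y \<or> siblings T (Node B A) y"
    and "N A + N B \<le> -1" and "N B \<le> -1" and "0 \<le> N y"
  shows "- 2 * N A - N B \<le> N y"
proof -
  have A: "A \<in> subtrees T" and B: "B \<in> subtrees T" and y: "y \<in> subtrees T"
    using assms(1) siblings_NodeD by blast+
  have labels: "real_of_int (N A) + real_of_int (N B) \<le> -1" "real_of_int (N B) \<le> -1"
    "0 \<le> real_of_int (N y)"
    using assms(2-4) by simp_all
  have "\<bar>- (u A + u B)\<bar> \<le> \<bar>- (u A + u y)\<bar>"
    using assms(1) swap_optimal_scaled[of A B y] swap_optimal_scaled[of B A y]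
    by (auto simp: ac_simps)
  moreover have "0 < - (u A + u B)" and "- (u A + u y) < - (u A + u B)"
    using labels near_label_bounds[OF A] near_label_bounds[OF B] near_label_bounds[OF y]
    by linarith+
  ultimately have "- (u A + u y) \<le> - (- (u A + u B))"
    by (rule le_neg_if_abs_le_abs)
  then have "real_of_int (- 2 * N A - N B - 1) < real_of_int (N y)"
    using near_label_bounds[OF A] near_label_bounds[OF B] near_label_bounds[OF y] by simp
  then show ?thesis
    by simp
qed

lemma large_label_forces_small_label:
  assumes max: "\<And>S. S \<in> subtrees T \<Longrightarrow> N S \<le> M"
    and z0: "z0 \<in> subtrees T" "N z0 = M" and "3 \<le> M"
  shows "\<exists>y\<in>subtrees T. is_internal y \<and> N y \<le> - M - 1"
proof -
  obtain z where z: "z \<in> subtrees T" "N z = M"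
    and z_least: "\<And>w. w \<in> subtrees T \<and> N w = M \<Longrightarrow> size z \<le> size w"
    using ex_has_least_nat[of "\<lambda>S. S \<in> subtrees T \<and> N S = M" z0 size] z0 by blast
  have "is_internal z"
    using z \<open>3 \<le> M\<close> by (intro internal_if_label_out_of_leaf_range) simp
  then obtain A B where AB: "z = Node A B"
    by (cases z) auto
  have "z \<noteq> T"
    using z root_label \<open>3 \<le> M\<close> by auto
  then obtain y where sib: "siblings T (Node A B) y"
    using subtrees_has_sibling z AB by blast
  then have A: "A \<in> subtrees T" and B: "B \<in> subtrees T" and y: "y \<in> subtrees T"
    using siblings_NodeD by blast+
  have "N A \<noteq> M" "N B \<noteq> M"
    using z_least[of A] z_least[of B] A B AB by force+
  then have "N A \<le> M - 1" "N B \<le> M - 1"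
    using max A B by force+
  moreover have "N A + N B = M"
    using z AB by simp
  moreover have "N y \<le> 0"
    using sib z AB max unfolding siblings_def by force
  ultimately have "N y \<le> - M - 1"
    using swap_bound_above[of A B y] sib \<open>3 \<le> M\<close> by force
  moreover have "is_internal y"
    using \<open>N y \<le> - M - 1\<close> \<open>3 \<le> M\<close> by (intro internal_if_label_out_of_leaf_range) simp
  ultimately show ?thesis
    using y by blast
qed

lemma small_label_forces_large_label:
  assumes min: "\<And>S. S \<in> subtrees T \<Longrightarrow> is_internal S \<Longrightarrow> mn \<le> N S"
    and z0: "z0 \<in> subtrees T" "is_internal z0" "N z0 = mn" and "mn \<le> -3"
  shows "\<exists>y\<in>subtrees T. - mn \<le> N y \<and> (mn \<le> -4 \<longrightarrow> - mn + 1 \<le> N y)"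
proof -
  obtain z where z: "z \<in> subtrees T" "is_internal z" "N z = mn"
    and z_least: "\<And>w. w \<in> subtrees T \<and> is_internal w \<and> N w = mn \<Longrightarrow> size z \<le> size w"
    using ex_has_least_nat[of "\<lambda>S. S \<in> subtrees T \<and> is_internal S \<and> N S = mn" z0 size] z0
    by blast
  obtain A B where AB: "z = Node A B"
    using z by (cases z) auto
  have "z \<noteq> T"
    using z root_label \<open>mn \<le> -3\<close> by auto
  then obtain y where sib: "siblings T (Node A B) y"
    using subtrees_has_sibling z AB by blast
  then have y: "y \<in> subtrees T"
    using siblings_NodeD by blast
  have "0 \<le> N y"
    using sib z AB min unfolding siblings_def by force
  have child_label: "mn + 1 \<le> N C \<or> N C = -3" if "C \<in> {A, B}" for C
  proof (cases "is_internal C")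
    case True
    then show ?thesis
      using that sib min[of C] z_least[of C] AB siblings_NodeD by force
  next
    case False
    then obtain x where "C = Leaf x"
      by (cases C) auto
    then show ?thesis
      using leaf_label_range[of x] \<open>mn \<le> -3\<close> by auto
  qed
  obtain P Q where PQ: "{P, Q} = {A, B}" and "N P \<le> N Q"
    by (cases "N A \<le> N B") (auto intro: that[of B A])
  then have "N P + N Q = mn" and child_PQ: "mn + 1 \<le> N P \<or> N P = -3" "mn + 1 \<le> N Q \<or> N Q = -3"
    using z AB child_label by (auto simp: doubleton_eq_iff)
  then have "N P \<le> -2" and Q_cases: "N Q \<le> -1 \<or> N Q = 0 \<and> mn = -3"
    using \<open>N P \<le> N Q\<close> \<open>mn \<le> -3\<close> by auto
  have "siblings T (Node Q P) y \<or> siblings T (Node P Q) y"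
    using PQ sib by (auto simp: doubleton_eq_iff)
  then have "- 2 * N Q - N P \<le> N y"
    using swap_bound_below[of Q P y] \<open>N P \<le> -2\<close> \<open>N P + N Q = mn\<close> \<open>mn \<le> -3\<close> \<open>0 \<le> N y\<close>
    by auto
  then have "- mn \<le> N y \<and> (mn \<le> -4 \<longrightarrow> - mn + 1 \<le> N y)"
    using Q_cases \<open>N P + N Q = mn\<close> by auto
  then show ?thesis
    using y by blast
qed

lemma exists_internal_label_minimum:
  assumes "w \<in> subtrees T" and "is_internal w"
  obtains z where "z \<in> subtrees T" "is_internal z" "N z \<le> N w"
    "\<And>S. S \<in> subtrees T \<Longrightarrow> is_internal S \<Longrightarrow> N z \<le> N S"
proof -
  have "finite {S \<in> subtrees T. is_internal S}" "{S \<in> subtrees T. is_internal S} \<noteq> {}"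
    using finite_subtrees assms by auto
  then obtain z where "is_arg_min N (\<lambda>S. S \<in> {S \<in> subtrees T. is_internal S}) z"
    using ex_is_arg_min_if_finite by blast
  then have z: "z \<in> subtrees T" "is_internal z"
    and least: "\<And>S. S \<in> subtrees T \<Longrightarrow> is_internal S \<Longrightarrow> N z \<le> N S"
    unfolding is_arg_min_linorder by simp_all
  show ?thesis
    by (rule that[OF z least[OF assms] least])
qed

lemma label_le_two:
  assumes "S \<in> subtrees T"
  shows "N S \<le> 2"
proof (rule ccontr)
  assume "\<not> N S \<le> 2"
  define M where "M = Max (N ` subtrees T)"
  have "finite (N ` subtrees T)" "N S \<in> N ` subtrees T"
    using finite_subtrees assms by auto
  then have max: "\<And>S. S \<in> subtrees T \<Longrightarrow> N S \<le> M" and "M \<in> N ` subtrees T"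
    unfolding M_def using Max_in by auto
  moreover have "3 \<le> M"
    using max[OF assms] \<open>\<not> N S \<le> 2\<close> by simp
  ultimately obtain y where y: "y \<in> subtrees T" "is_internal y" and "N y \<le> - M - 1"
    using large_label_forces_small_label by blast
  obtain z where z: "z \<in> subtrees T" "is_internal z" "N z \<le> N y"
    and least: "\<And>S. S \<in> subtrees T \<Longrightarrow> is_internal S \<Longrightarrow> N z \<le> N S"
    using exists_internal_label_minimum[OF y] by blast
  have "N z \<le> -4"
    using z(3) \<open>N y \<le> - M - 1\<close> \<open>3 \<le> M\<close> by simp
  then obtain y' where "y' \<in> subtrees T" "- N z + 1 \<le> N y'"
    using small_label_forces_large_label[OF least z(1,2) refl] by auto
  then show False
    using max[of y'] z(3) \<open>N y \<le> - M - 1\<close> by simp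
qed

lemma internal_label_ge_neg_two:
  assumes "S \<in> subtrees T" and "is_internal S"
  shows "-2 \<le> N S"
proof (rule ccontr)
  assume "\<not> -2 \<le> N S"
  obtain z where z: "z \<in> subtrees T" "is_internal z" "N z \<le> N S"
    and least: "\<And>S. S \<in> subtrees T \<Longrightarrow> is_internal S \<Longrightarrow> N z \<le> N S"
    using exists_internal_label_minimum[OF assms] by blast
  have "N z \<le> -3"
    using z(3) \<open>\<not> -2 \<le> N S\<close> by simp
  then obtain y where "y \<in> subtrees T" "- N z \<le> N y"
    using small_label_forces_large_label[OF least z(1,2) refl] by auto
  then show False
    using label_le_two[of y] \<open>N z \<le> -3\<close> by simp
qed

lemma label_of_positive_node:
  assumes "S \<in> subtrees T" and "0 < aval S"
  shows "N S \<in> {0, 1, 2}"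
proof -
  have "0 < u S"
    using assms(2) scale_pos by (simp add: u_def)
  then have "0 \<le> N S"
    using near_label_bounds[OF assms(1)] by linarith
  then show ?thesis
    using label_le_two[OF assms(1)] by auto
qed

lemma label_of_negative_internal_node:
  assumes "S \<in> subtrees T" and "is_internal S" and "aval S < 0"
  shows "N S \<in> {-2, -1, 0}"
proof -
  have "u S < 0"
    using assms(3) scale_pos by (simp add: u_def mult_pos_neg)
  then have "N S \<le> 0"
    using near_label_bounds[OF assms(1)] by linarith
  then show ?thesis
    using internal_label_ge_neg_two[OF assms(1,2)] by auto
qed

end

section \<open>The reduction from 3-partition\<close>

lemma abs_sum_mset_le:
  fixes g :: "'a \<Rightarrow> real"
  assumes "\<And>x. x \<in># M \<Longrightarrow> \<bar>g x\<bar> \<le> d"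
  shows "\<bar>\<Sum>x\<in>#M. g x\<bar> \<le> real (size M) * d"
proof -
  have "(\<Sum>x\<in>#M. g x) \<le> (\<Sum>x\<in>#M. d)" and "(\<Sum>x\<in>#M. - d) \<le> (\<Sum>x\<in>#M. g x)"
    using assms abs_le_D1 abs_le_D2 by (intro sum_mset_mono; fastforce)+
  then show ?thesis
    by (simp add: abs_le_iff)
qed

lemma sum_mset_as_signed_sum:
  assumes "\<And>x. x \<in># M \<Longrightarrow> g x = 0 \<or> (\<exists>i\<le>n. g x = \<beta> i)"
  shows "\<exists>ss :: (bool \<times> nat) list. length ss \<le> size M \<and> (\<forall>(s, i)\<in>set ss. i \<le> n) \<and>
           (\<Sum>x\<in>#M. g x) = (\<Sum>(s, i)\<leftarrow>ss. if s then \<beta> i else - \<beta> i)"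
  using assms
proof (induction M)
  case empty
  show ?case
    by (intro exI[of _ "[]"]) simp
next
  case (add x M)
  then obtain ss where ss: "length ss \<le> size M" "\<forall>(s, i)\<in>set ss. i \<le> n"
    "(\<Sum>x\<in>#M. g x) = (\<Sum>(s, i)\<leftarrow>ss. if s then \<beta> i else - \<beta> i)"
    by auto
  consider "g x = 0" | i where "i \<le> n" "g x = \<beta> i"
    using add.prems by auto
  then show ?case
  proof cases
    case 1
    then show ?thesis
      using ss by (intro exI[of _ ss]) auto
  next
    case 2
    then show ?thesis
      using ss by (intro exI[of _ "(True, i) # ss"]) auto
  qed
qed

lemma is_lambda_sum_mset:
  assumes "size M \<le> 5 * m" and "\<And>x. x \<in># M \<Longrightarrow> g x = 0 \<or> (\<exists>i\<le>3 * m. g x = \<beta> i)"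
  shows "is_lambda m \<beta> (\<Sum>x\<in>#M. g x)"
proof -
  obtain ss where "length ss \<le> size M" "\<forall>(s, i)\<in>set ss. i \<le> 3 * m"
    "(\<Sum>x\<in>#M. g x) = (\<Sum>(s, i)\<leftarrow>ss. if s then \<beta> i else - \<beta> i)"
    using sum_mset_as_signed_sum[of M g "3 * m" \<beta>] assms(2) by blast
  then show ?thesis
    using assms(1) unfolding is_lambda_def by (intro exI[of _ ss]) simp
qed

lemma aval_eq_label_sum_plus_deviation:
  fixes H :: real
  assumes "H \<noteq> 0"
  shows "aval T = (label_sum f T / 3 + (\<Sum>x\<in>#leaves T. x / H - f x / 3)) * H"
  using assms by (induction T) (auto simp: field_simps)

locale three_partition_gadget =
  fixes m K :: nat and b :: "nat \<Rightarrow> nat"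
    and W L \<epsilon> H :: real and h :: int
    and a \<beta> :: "nat \<Rightarrow> real"
    and X :: "real multiset"
  assumes m_pos: "m > 0" and K_pos: "K > 0"
    and b_bounds: "\<And>i. i \<in> {1..3*m} \<Longrightarrow> real K / 4 < real (b i) \<and> real (b i) < real K / 2"
    and W_eq: "W = 100 * (5 * real m)^2 * real K"
    and a_eq: "\<And>i. a i = real (b i) + W"
    and L_eq: "L = 3 * W + real K"
    and eps_eq: "\<epsilon> = 1 / (400 * (5 * real m)^2)"
    and h_eq: "h = \<lfloor>4 * \<epsilon> * L\<rfloor>"
    and H_eq: "H = L + real_of_int h"
    and \<beta>_0: "\<beta> 0 = real_of_int h / H"
    and \<beta>_a: "\<And>i. i \<in> {1..3*m} \<Longrightarrow> \<beta> i = a i / H - 1/3"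
    and X_eq: "X = mset (map a [1..<3*m+1]) + replicate_mset m (- H) + replicate_mset m (real_of_int h)"
begin

lemma h_bounds: "0 \<le> h \<and> real_of_int h \<le> 4 * real K"
proof -
  have m2: "1 \<le> real m ^ 2"
    using m_pos by simp
  have "4 * \<epsilon> * L = 3 * real K + real K / (2500 * real m ^ 2)"
    using m_pos unfolding eps_eq L_eq W_eq by (simp add: field_simps power_mult_distrib)
  moreover have "real K / (2500 * real m ^ 2) \<le> real K"
    using divide_left_mono[of 1 "2500 * real m ^ 2" "real K"] m2 m_pos by simp
  ultimately have "0 \<le> 4 * \<epsilon> * L" "4 * \<epsilon> * L \<le> 4 * real K"
    by auto
  then show ?thesis
    unfolding h_eq by linarith
qed

lemma H_lower_bound: "7500 * real m ^ 2 * real K \<le> H"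
  using h_bounds unfolding H_eq L_eq W_eq by (simp add: power_mult_distrib)

lemma H_pos: "0 < H"
proof -
  have "0 < 7500 * real m ^ 2 * real K"
    using m_pos K_pos by simp
  then show ?thesis
    using H_lower_bound by linarith
qed

lemma h_less_W: "real_of_int h < W"
proof -
  have "1 \<le> real m ^ 2"
    using m_pos by simp
  then have "real K \<le> real m ^ 2 * real K"
    by (simp add: mult_le_cancel_right1)
  moreover have "W = 2500 * (real m ^ 2 * real K)"
    unfolding W_eq by (simp add: power_mult_distrib)
  ultimately show ?thesis
    using h_bounds K_pos by linarith
qed

text \<open>
  \<open>leaf_label x / 3\<close> is the multiple of 1/3 closest to \<open>x / H\<close>, and \<open>deviation x\<close>
  is the matching \<open>\<lambda>\<close>-term: \<open>\<beta> i\<close> for \<open>a i\<close>, \<open>\<beta> 0\<close> for \<open>h\<close> and 0 for \<open>-H\<close>.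
\<close>

definition leaf_label :: "real \<Rightarrow> int" where
  "leaf_label x = (if x = - H then -3 else if x = real_of_int h then 0 else 1)"

definition deviation :: "real \<Rightarrow> real" where
  "deviation x = x / H - leaf_label x / 3"

lemma leaf_label_range: "-3 \<le> leaf_label x \<and> leaf_label x \<le> 1"
  by (simp add: leaf_label_def)

lemma mem_X_cases:
  assumes "x \<in># X"
  obtains "x = - H" | "x = real_of_int h" | i where "i \<in> {1..3*m}" "x = a i"
proof -
  have "x \<in> a ` {1..<3*m+1} \<or> x = - H \<or> x = real_of_int h"
    using assms unfolding X_eq by (auto split: if_splits)
  then show ?thesis
    using that by (auto simp: atLeastLessThanSuc_atLeastAtMost)
qed

lemma leaf_label_a: "leaf_label (a i) = 1"
proof -
  have "0 \<le> real_of_int h"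
    using h_bounds by simp
  then show ?thesis
    using h_less_W H_pos unfolding leaf_label_def a_eq by auto
qed

lemma leaf_label_minus_H: "leaf_label (- H) = -3"
  by (simp add: leaf_label_def)

lemma leaf_label_h: "leaf_label (real_of_int h) = 0"
  using h_bounds H_pos by (simp add: leaf_label_def)

lemma deviation_is_beta:
  assumes "x \<in># X"
  shows "deviation x = 0 \<or> (\<exists>i\<le>3 * m. deviation x = \<beta> i)"
  using assms
proof (cases rule: mem_X_cases)
  case 1
  then show ?thesis
    using H_pos by (simp add: deviation_def leaf_label_minus_H)
next
  case 2
  then show ?thesis
    using \<beta>_0 by (auto simp: deviation_def leaf_label_h)
next
  case (3 i)
  then show ?thesis
    using \<beta>_a[of i] by (auto simp: deviation_def leaf_label_a)
qed

lemma abs_deviation_le: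
  assumes "x \<in># X"
  shows "\<bar>deviation x\<bar> \<le> 5 * real K / H"
  using assms
proof (cases rule: mem_X_cases)
  case 1
  then show ?thesis
    using H_pos by (simp add: deviation_def leaf_label_minus_H)
next
  case 2
  then have "\<bar>deviation x\<bar> = real_of_int h / H"
    using h_bounds H_pos by (simp add: deviation_def leaf_label_h)
  also have "\<dots> \<le> 5 * real K / H"
    using h_bounds H_pos by (intro divide_right_mono) auto
  finally show ?thesis .
next
  case (3 i)
  have "deviation x = (3 * a i - H) / (3 * H)"
    using 3 H_pos by (simp add: deviation_def leaf_label_a field_simps)
  also have "3 * a i - H = 3 * real (b i) - real K - real_of_int h"
    unfolding a_eq H_eq L_eq by simp
  finally have "\<bar>deviation x\<bar> = \<bar>3 * real (b i) - real K - real_of_int h\<bar> / (3 * H)"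
    using H_pos by simp
  also have "\<dots> \<le> (15 * real K) / (3 * H)"
    using b_bounds[OF 3(1)] h_bounds H_pos unfolding abs_le_iff
    by (intro divide_right_mono) linarith+
  finally show ?thesis
    by simp
qed

lemma size_X: "size X = 5 * m"
  by (simp add: X_eq)

lemma total_deviation_le: "real (size X) * (5 * real K / H) \<le> 1 / 300"
proof -
  have "real m * real K \<le> real m ^ 2 * real K"
    using m_pos by (intro mult_right_mono) (auto simp: power2_eq_square)
  then have "7500 * real m * real K \<le> H"
    using H_lower_bound by linarith
  then show ?thesis
    using H_pos by (simp add: size_X field_simps)
qed

context
  fixes T :: atree
  assumes leaves_T: "leaves T = X"
begin

lemma root_label: "label_sum leaf_label T = 0"
proof -
  have "label_sum leaf_label T = (\<Sum>x\<in>#X. leaf_label x)"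
    by (simp add: label_sum_eq_sum_leaves leaves_T)
  also have "\<dots> = int (3 * m) - 3 * int m"
  proof -
    have "leaf_label \<circ> a = (\<lambda>_. 1)"
      by (simp add: fun_eq_iff leaf_label_a)
    then show ?thesis
      by (simp add: X_eq leaf_label_minus_H leaf_label_h sum_mset_sum_list sum_list_triv
          flip: mset_map)
  qed
  finally show ?thesis
    by simp
qed

lemma leaves_subtree_X: "S \<in> subtrees T \<Longrightarrow> leaves S \<subseteq># X"
  using leaves_subtrees_subset leaves_T by metis

lemma aval_subtree_eq:
  "aval S = (label_sum leaf_label S / 3 + (\<Sum>x\<in>#leaves S. deviation x)) * H"
  using aval_eq_label_sum_plus_deviation[of H] H_pos unfolding deviation_def by simp

lemma near_label:
  assumes "S \<in> subtrees T"
  shows "\<bar>3 / H * aval S - label_sum leaf_label S\<bar> \<le> 1 / 100"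
proof -
  have sub: "leaves S \<subseteq># X"
    using leaves_subtree_X[OF assms] .
  have "\<bar>\<Sum>x\<in>#leaves S. deviation x\<bar> \<le> real (size (leaves S)) * (5 * real K / H)"
    using abs_deviation_le sub by (intro abs_sum_mset_le) (auto dest: mset_subset_eqD)
  also have "\<dots> \<le> real (size X) * (5 * real K / H)"
    using size_mset_mono[OF sub] H_pos by (intro mult_right_mono) auto
  also have "\<dots> \<le> 1 / 300"
    by (rule total_deviation_le)
  finally have "\<bar>\<Sum>x\<in>#leaves S. deviation x\<bar> \<le> 1 / 300" .
  moreover have "3 / H * aval S - label_sum leaf_label S = 3 * (\<Sum>x\<in>#leaves S. deviation x)"
    using H_pos by (subst aval_subtree_eq) (simp add: field_simps)
  ultimately show ?thesis
    by simp
qed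

lemma of_form_label:
  assumes "S \<in> subtrees T"
  shows "of_form m \<beta> H (label_sum leaf_label S / 3) (aval S)"
proof -
  have sub: "leaves S \<subseteq># X"
    using leaves_subtree_X[OF assms] .
  have "is_lambda m \<beta> (\<Sum>x\<in>#leaves S. deviation x)"
    using size_mset_mono[OF sub] size_X deviation_is_beta sub
    by (intro is_lambda_sum_mset) (auto dest: mset_subset_eqD)
  then show ?thesis
    unfolding of_form_def using aval_subtree_eq by blast
qed

end

end

theorem lemma2p7:
  fixes m K :: nat and b :: "nat \<Rightarrow> nat"
    and W L \<epsilon> H :: real and h :: int
    and a \<beta> :: "nat \<Rightarrow> real"
    and X :: "real multiset" and T :: atree
  assumes "m > 0" and "K > 0"
    and "\<And>i. i \<in> {1..3*m} \<Longrightarrow> b i > 0"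
    and "\<And>i. i \<in> {1..3*m} \<Longrightarrow> real K / 4 < real (b i) \<and> real (b i) < real K / 2"
    and "(\<Sum>i=1..3*m. b i) = m * K"
    and "W = 100 * (5 * real m)^2 * real K"
    and "\<And>i. a i = real (b i) + W"
    and "L = 3 * W + real K"
    and "\<epsilon> = 1 / (400 * (5 * real m)^2)"
    and "h = \<lfloor>4 * \<epsilon> * L\<rfloor>"
    and "H = L + real_of_int h"
    and "\<beta> 0 = real_of_int h / H"
    and "\<And>i. i \<in> {1..3*m} \<Longrightarrow> \<beta> i = a i / H - 1/3"
    and "X = mset (map a [1..<3*m+1]) + replicate_mset m (- H) + replicate_mset m (real_of_int h)"
    and "min_addition_tree X T"
  shows "(\<forall>S \<in> subtrees T. aval S > 0 \<longrightarrow>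
            of_form m \<beta> H 0 (aval S) \<or> of_form m \<beta> H (1/3) (aval S) \<or> of_form m \<beta> H (2/3) (aval S))
       \<and> (\<forall>S \<in> subtrees T. is_internal S \<and> aval S < 0 \<longrightarrow>
            of_form m \<beta> H 0 (aval S) \<or> of_form m \<beta> H (-1/3) (aval S) \<or> of_form m \<beta> H (-2/3) (aval S))"
proof -
  interpret three_partition_gadget m K b W L \<epsilon> H h a \<beta> X
    using assms(1,2,4,6-14) by unfold_locales
  have leaves_T: "leaves T = X"
    using assms(15) by (simp add: min_addition_tree_def addition_tree_def)
  interpret labelled_swap_optimal_tree T leaf_label "3 / H"
    using min_addition_tree_swap_optimal[OF assms(15)] H_pos near_label[OF leaves_T]
      leaf_label_range root_label[OF leaves_T]
    by unfold_locales auto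
  show ?thesis
  proof (intro conjI ballI impI)
    fix S assume "S \<in> subtrees T" and "aval S > 0"
    then show "of_form m \<beta> H 0 (aval S) \<or> of_form m \<beta> H (1/3) (aval S) \<or> of_form m \<beta> H (2/3) (aval S)"
      using label_of_positive_node of_form_label[OF leaves_T] by fastforce
  next
    fix S assume "S \<in> subtrees T" and "is_internal S \<and> aval S < 0"
    then show "of_form m \<beta> H 0 (aval S) \<or> of_form m \<beta> H (-1/3) (aval S) \<or> of_form m \<beta> H (-2/3) (aval S)"
      using label_of_negative_internal_node of_form_label[OF leaves_T] by fastforce
  qed
qed

end
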